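(* The sequence $(m_n)_{n\ge0}$ is infinitely divisible: for every $\alpha>0$, $(m_n^\alpha)_{n\ge0}$ is a Hausdorff moment sequence.
   Context: $(m_n)_{n\ge0}$ is the unique sequence of positive reals with $m_0=1$ and $(1+m_1+\cdots+m_n)m_n=1$ for $n\ge1$. A Hausdorff moment sequence is a sequence of the form $\big(\int_0^1t^n\,d\tau(t)\big)_{n\ge0}$ for a positive measure $\tau$ on $[0,1]$. *)

theory Defs
  imports "HOL-Probability.Probability"
begin

definition is_m_seq :: "(nat \<Rightarrow> real) \<Rightarrow> bool" where
  "is_m_seq m \<longleftrightarrow> m 0 = 1 \<and> (\<forall>n. m n > 0) \<and>
     (\<forall>n\<ge>1. (1 + (\<Sum>k=1..n. m k)) * m n = 1)"

definition m_seq :: "nat \<Rightarrow> real" where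
  "m_seq = (THE m. is_m_seq m)"

definition hausdorff_moment_seq :: "(nat \<Rightarrow> real) \<Rightarrow> bool" where
  "hausdorff_moment_seq c \<longleftrightarrow>
     (\<exists>\<tau> :: real measure.
        sets \<tau> = sets (restrict_space borel {0..1}) \<and> finite_measure \<tau> \<and>
        (\<forall>n. integrable \<tau> (\<lambda>t. t ^ n) \<and> c n = (\<integral>t. t ^ n \<partial>\<tau>)))"

end

theory Submission
  imports Defs
begin

text \<open>Call c a limit moment sequence if it is the pointwise limit of moment sequences of
  finitely supported positive measures on [0, 1]. These sequences are closed under sums,
  products, nonnegative multiples, shifts and pointwise limits, and by Helly's selection
  theorem each of them is a Hausdorff moment sequence.

  If a is a limit moment sequence with a_0 > 0, then so is (a_0 + ... + a_n)^(-alpha) for every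
  alpha > 0. For the damped sequence r^j a_j with r < 1 the partial sums are C - d_n, where C is
  the total sum and the tail d_n is again a limit moment sequence, and
  (C - d)^(-alpha) = sum_i (alpha)_i / i! C^(-alpha-i) d^i has nonnegative coefficients; then let r
  tend to 1.

  The sequence m is the fixed point of the map a |-> (1 / (a_0 + ... + a_n))_n. Its iterates,
  starting from (1, 0, 0, ...), are limit moment sequences by the previous step, and they
  converge to m entrywise: by induction on n, the n-th entries obey a recursion that contracts
  towards m_n. Hence m is a limit moment sequence, and so is
  m_n^alpha = (m_0 + ... + m_n)^(-alpha).\<close>

section \<open>Discrete moment sequences and their limits\<close>

text \<open>A list of pairs (x, w) stands for the measure with mass w at each point x.\<close>

definition atom_moments :: "(real \<times> real) list \<Rightarrow> nat \<Rightarrow> real" where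
  "atom_moments xs n = (\<Sum>p\<leftarrow>xs. snd p * fst p ^ n)"

definition unit_atoms :: "(real \<times> real) list \<Rightarrow> bool" where
  "unit_atoms xs \<longleftrightarrow> (\<forall>p\<in>set xs. 0 \<le> fst p \<and> fst p \<le> 1 \<and> 0 \<le> snd p)"

definition discrete_moment_seq :: "(nat \<Rightarrow> real) \<Rightarrow> bool" where
  "discrete_moment_seq c \<longleftrightarrow> (\<exists>xs. unit_atoms xs \<and> c = atom_moments xs)"

lemma discrete_moment_seq_geometric: "0 \<le> x \<Longrightarrow> x \<le> 1 \<Longrightarrow> discrete_moment_seq (\<lambda>n. x ^ n)"
  unfolding discrete_moment_seq_def unit_atoms_def atom_moments_def
  by (intro exI[of _ "[(x, 1)]"]) auto

lemma discrete_moment_seq_zero: "discrete_moment_seq (\<lambda>n. 0)"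
  unfolding discrete_moment_seq_def unit_atoms_def atom_moments_def
  by (intro exI[of _ "[]"]) auto

lemma discrete_moment_seq_scale:
  assumes "discrete_moment_seq c" "0 \<le> t"
  shows "discrete_moment_seq (\<lambda>n. t * c n)"
proof -
  obtain xs where "unit_atoms xs" "c = atom_moments xs"
    using assms(1) unfolding discrete_moment_seq_def by blast
  then show ?thesis
    unfolding discrete_moment_seq_def unit_atoms_def atom_moments_def using assms(2)
    by (intro exI[of _ "map (\<lambda>p. (fst p, t * snd p)) xs"])
      (auto simp: o_def sum_list_const_mult mult.assoc)
qed

lemma discrete_moment_seq_add:
  assumes "discrete_moment_seq a" "discrete_moment_seq b"
  shows "discrete_moment_seq (\<lambda>n. a n + b n)"
proof -
  obtain xs ys where "unit_atoms xs" "a = atom_moments xs" "unit_atoms ys" "b = atom_moments ys"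
    using assms unfolding discrete_moment_seq_def by blast
  then show ?thesis
    unfolding discrete_moment_seq_def unit_atoms_def atom_moments_def
    by (intro exI[of _ "xs @ ys"]) auto
qed

lemma atom_moments_product:
  "atom_moments [(fst p * fst q, snd p * snd q). p \<leftarrow> xs, q \<leftarrow> ys] n =
   atom_moments xs n * atom_moments ys n"
proof (induction xs)
  case (Cons p xs)
  have "(\<Sum>q\<leftarrow>ys. snd p * snd q * (fst p * fst q) ^ n) = snd p * fst p ^ n * atom_moments ys n"
    unfolding atom_moments_def
    by (simp add: sum_list_const_mult[symmetric] power_mult_distrib mult_ac)
  with Cons show ?case
    by (simp add: atom_moments_def o_def algebra_simps)
qed (simp add: atom_moments_def)

lemma discrete_moment_seq_mult:
  assumes "discrete_moment_seq a" "discrete_moment_seq b"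
  shows "discrete_moment_seq (\<lambda>n. a n * b n)"
proof -
  obtain xs ys where "unit_atoms xs" "a = atom_moments xs" "unit_atoms ys" "b = atom_moments ys"
    using assms unfolding discrete_moment_seq_def by blast
  then show ?thesis
    unfolding discrete_moment_seq_def
    by (intro exI[of _ "[(fst p * fst q, snd p * snd q). p \<leftarrow> xs, q \<leftarrow> ys]"])
      (auto simp: unit_atoms_def atom_moments_product intro: mult_le_one)
qed

lemma discrete_moment_seq_shift:
  assumes "discrete_moment_seq a"
  shows "discrete_moment_seq (\<lambda>n. a (Suc n))"
proof -
  obtain xs where "unit_atoms xs" "a = atom_moments xs"
    using assms unfolding discrete_moment_seq_def by blast
  then show ?thesis
    unfolding discrete_moment_seq_def unit_atoms_def atom_moments_def
    by (intro exI[of _ "map (\<lambda>p. (fst p, snd p * fst p)) xs"]) (auto simp: o_def mult_ac)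
qed

lemma discrete_moment_seq_nonneg: "discrete_moment_seq a \<Longrightarrow> 0 \<le> a n"
  unfolding discrete_moment_seq_def unit_atoms_def atom_moments_def
  by (fastforce intro!: sum_list_nonneg)

lemma discrete_moment_seq_le_0: "discrete_moment_seq a \<Longrightarrow> a n \<le> a 0"
  unfolding discrete_moment_seq_def unit_atoms_def atom_moments_def
  by (auto intro!: sum_list_mono mult_left_le power_le_one)

definition limit_moment_seq :: "(nat \<Rightarrow> real) \<Rightarrow> bool" where
  "limit_moment_seq c \<longleftrightarrow>
     (\<exists>f. (\<forall>k. discrete_moment_seq (f k)) \<and> (\<forall>n. (\<lambda>k. f k n) \<longlonglongrightarrow> c n))"

lemma limit_moment_seq_discrete: "discrete_moment_seq c \<Longrightarrow> limit_moment_seq c"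
  unfolding limit_moment_seq_def by (intro exI[of _ "\<lambda>k. c"]) auto

lemma limit_moment_seq_geometric: "0 \<le> x \<Longrightarrow> x \<le> 1 \<Longrightarrow> limit_moment_seq (\<lambda>n. x ^ n)"
  by (intro limit_moment_seq_discrete discrete_moment_seq_geometric)

lemma limit_moment_seq_add:
  assumes "limit_moment_seq a" "limit_moment_seq b"
  shows "limit_moment_seq (\<lambda>n. a n + b n)"
proof -
  obtain f g where "\<forall>k. discrete_moment_seq (f k)" "\<forall>n. (\<lambda>k. f k n) \<longlonglongrightarrow> a n"
    "\<forall>k. discrete_moment_seq (g k)" "\<forall>n. (\<lambda>k. g k n) \<longlonglongrightarrow> b n"
    using assms unfolding limit_moment_seq_def by metis
  then show ?thesis
    unfolding limit_moment_seq_def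
    by (intro exI[of _ "\<lambda>k n. f k n + g k n"]) (auto intro!: discrete_moment_seq_add tendsto_add)
qed

lemma limit_moment_seq_mult:
  assumes "limit_moment_seq a" "limit_moment_seq b"
  shows "limit_moment_seq (\<lambda>n. a n * b n)"
proof -
  obtain f g where "\<forall>k. discrete_moment_seq (f k)" "\<forall>n. (\<lambda>k. f k n) \<longlonglongrightarrow> a n"
    "\<forall>k. discrete_moment_seq (g k)" "\<forall>n. (\<lambda>k. g k n) \<longlonglongrightarrow> b n"
    using assms unfolding limit_moment_seq_def by metis
  then show ?thesis
    unfolding limit_moment_seq_def
    by (intro exI[of _ "\<lambda>k n. f k n * g k n"]) (auto intro!: discrete_moment_seq_mult tendsto_mult)
qed

lemma limit_moment_seq_scale:
  assumes "limit_moment_seq a" "0 \<le> t"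
  shows "limit_moment_seq (\<lambda>n. t * a n)"
proof -
  obtain f where "\<forall>k. discrete_moment_seq (f k)" "\<forall>n. (\<lambda>k. f k n) \<longlonglongrightarrow> a n"
    using assms(1) unfolding limit_moment_seq_def by metis
  then show ?thesis
    unfolding limit_moment_seq_def using assms(2)
    by (intro exI[of _ "\<lambda>k n. t * f k n"]) (auto intro!: discrete_moment_seq_scale tendsto_mult)
qed

lemma limit_moment_seq_shift:
  assumes "limit_moment_seq a"
  shows "limit_moment_seq (\<lambda>n. a (n + i))"
proof -
  obtain f where "\<forall>k. discrete_moment_seq (f k)" "\<forall>n. (\<lambda>k. f k n) \<longlonglongrightarrow> a n"
    using assms unfolding limit_moment_seq_def by metis
  moreover have "discrete_moment_seq (\<lambda>n. c (n + i))" if "discrete_moment_seq c" for c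
    using that by (induction i) (auto dest: discrete_moment_seq_shift)
  ultimately show ?thesis
    unfolding limit_moment_seq_def by (intro exI[of _ "\<lambda>k n. f k (n + i)"]) auto
qed

lemma
  assumes "limit_moment_seq a"
  shows limit_moment_seq_nonneg: "0 \<le> a n" and limit_moment_seq_le_0: "a n \<le> a 0"
proof -
  obtain f where f: "\<And>k. discrete_moment_seq (f k)" "\<And>n. (\<lambda>k. f k n) \<longlonglongrightarrow> a n"
    using assms unfolding limit_moment_seq_def by metis
  show "0 \<le> a n"
    using f by (intro LIMSEQ_le_const[OF f(2)]) (auto intro: discrete_moment_seq_nonneg)
  show "a n \<le> a 0"
    using f by (intro LIMSEQ_le[OF f(2) f(2)]) (auto intro: discrete_moment_seq_le_0)
qed

lemma limit_moment_seq_le_sum_atMost: "limit_moment_seq a \<Longrightarrow> a 0 \<le> (\<Sum>j\<le>n. a j)"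
  by (rule member_le_sum) (auto intro: limit_moment_seq_nonneg)

lemma limit_moment_seq_limit:
  assumes lim_seq: "\<And>k. limit_moment_seq (g k)" and lim: "\<And>n. (\<lambda>k. g k n) \<longlonglongrightarrow> c n"
  shows "limit_moment_seq c"
proof -
  have "\<exists>h. discrete_moment_seq h \<and> (\<forall>n\<le>k. \<bar>h n - g k n\<bar> < inverse (real (Suc k)))" for k
  proof -
    obtain f where f: "\<forall>j. discrete_moment_seq (f j)" "\<forall>n. (\<lambda>j. f j n) \<longlonglongrightarrow> g k n"
      using lim_seq[of k] unfolding limit_moment_seq_def by blast
    have "\<forall>n\<in>{..k}. eventually (\<lambda>j. dist (f j n) (g k n) < inverse (real (Suc k))) sequentially"
      using f(2) by (auto intro!: tendstoD)
    then have "eventually (\<lambda>j. \<forall>n\<in>{..k}. dist (f j n) (g k n) < inverse (real (Suc k))) sequentially"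
      by (intro eventually_ball_finite) auto
    then obtain j where "\<forall>n\<in>{..k}. dist (f j n) (g k n) < inverse (real (Suc k))"
      by (auto simp: eventually_sequentially)
    with f(1) show ?thesis by (intro exI[of _ "f j"]) (auto simp: dist_real_def)
  qed
  then obtain h where h: "\<And>k. discrete_moment_seq (h k)"
    "\<And>k n. n \<le> k \<Longrightarrow> \<bar>h k n - g k n\<bar> < inverse (real (Suc k))"
    by metis
  have "(\<lambda>k. h k n) \<longlonglongrightarrow> c n" for n
  proof -
    have "(\<lambda>k. h k n - g k n) \<longlonglongrightarrow> 0"
      by (rule Lim_null_comparison[OF _ LIMSEQ_inverse_real_of_nat])
        (use h(2) in \<open>auto intro!: eventually_sequentiallyI[of n] less_imp_le\<close>)
    from tendsto_add[OF this lim[of n]] show ?thesis by simp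
  qed
  with h(1) show ?thesis unfolding limit_moment_seq_def by blast
qed

lemma limit_moment_seq_sum:
  fixes g :: "nat \<Rightarrow> nat \<Rightarrow> real"
  shows "(\<And>i. limit_moment_seq (g i)) \<Longrightarrow> limit_moment_seq (\<lambda>n. \<Sum>i<N. g i n)"
  by (induction N) (auto intro: limit_moment_seq_add limit_moment_seq_discrete discrete_moment_seq_zero)

lemma limit_moment_seq_sums:
  fixes g :: "nat \<Rightarrow> nat \<Rightarrow> real"
  assumes "\<And>i. limit_moment_seq (g i)" "\<And>n. (\<lambda>i. g i n) sums c n"
  shows "limit_moment_seq c"
  by (rule limit_moment_seq_limit[of "\<lambda>N n. \<Sum>i<N. g i n"])
    (use assms in \<open>auto intro: limit_moment_seq_sum simp: sums_def\<close>)

lemma limit_moment_seq_power: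
  "limit_moment_seq a \<Longrightarrow> limit_moment_seq (\<lambda>n. a n ^ j)"
  by (induction j) (auto intro: limit_moment_seq_mult limit_moment_seq_geometric[of 1, simplified])

section \<open>Limit moment sequences are Hausdorff moment sequences\<close>

lemma hausdorff_moment_seq_scale:
  assumes "hausdorff_moment_seq c" "0 \<le> s"
  shows "hausdorff_moment_seq (\<lambda>n. s * c n)"
proof -
  obtain \<tau> where \<tau>: "sets \<tau> = sets (restrict_space borel {0..1})" "finite_measure \<tau>"
    "\<And>n. integrable \<tau> (\<lambda>t. t ^ n)" "\<And>n. c n = (\<integral>t. t ^ n \<partial>\<tau>)"
    using assms(1) unfolding hausdorff_moment_seq_def by blast
  interpret finite_measure \<tau> by (rule \<tau>(2))
  define \<tau>' where "\<tau>' = density \<tau> (\<lambda>_. ennreal s)"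
  have "emeasure \<tau>' (space \<tau>') = ennreal s * emeasure \<tau> (space \<tau>)"
    unfolding \<tau>'_def by (simp only: space_density emeasure_density_const[OF sets.top])
  then have "finite_measure \<tau>'"
    by (intro finite_measureI) (simp add: ennreal_mult_eq_top_iff)
  moreover have "integrable \<tau>' (\<lambda>t. t ^ n)" for n
    unfolding \<tau>'_def using \<tau>(3) assms(2) by (simp add: integrable_density)
  moreover have "(\<integral>t. t ^ n \<partial>\<tau>') = s * c n" for n
    unfolding \<tau>'_def \<tau>(4) using assms(2)
    by (subst integral_density) (simp_all add: borel_measurable_integrable[OF \<tau>(3)])
  ultimately show ?thesis
    unfolding hausdorff_moment_seq_def using \<tau>(1) by (intro exI[of _ \<tau>']) (simp add: \<tau>'_def)
qed

text \<open>The powers t^n are unbounded on the real line; clamping to [0, 1] turns them into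
  bounded continuous functions, as required for weak convergence of distributions.\<close>

definition unit_clamp :: "real \<Rightarrow> real" where
  "unit_clamp x = max 0 (min 1 x)"

lemma unit_clamp_measurable [measurable]: "unit_clamp \<in> borel_measurable borel"
  unfolding unit_clamp_def by measurable

lemma isCont_unit_clamp_power: "isCont (\<lambda>x. unit_clamp x ^ n) x"
  unfolding unit_clamp_def by (intro continuous_intros)

lemma norm_unit_clamp_power_le_1: "norm (unit_clamp x ^ n) \<le> 1"
  unfolding unit_clamp_def by (auto simp: abs_mult power_abs intro!: power_le_one)

lemma unit_clamp_id: "0 \<le> x \<Longrightarrow> x \<le> 1 \<Longrightarrow> unit_clamp x = x"
  unfolding unit_clamp_def by auto

lemma hausdorff_moment_seq_distribution:
  assumes "real_distribution M"
  shows "hausdorff_moment_seq (\<lambda>n. \<integral>x. unit_clamp x ^ n \<partial>M)"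
proof -
  interpret real_distribution M by (rule assms)
  have clamp: "unit_clamp \<in> measurable M (restrict_space borel {0..1})"
    by (rule measurable_restrict_space2) (auto simp: unit_clamp_def)
  define \<tau> where "\<tau> = distr M (restrict_space borel {0..1}) unit_clamp"
  interpret \<tau>: prob_space \<tau>
    unfolding \<tau>_def using clamp by (rule prob_space_distr)
  have "integrable \<tau> (\<lambda>t. t ^ n)" for n
  proof (rule \<tau>.integrable_const_bound[where B=1])
    show "AE t in \<tau>. norm (t ^ n) \<le> 1"
      by (intro AE_I2) (auto simp: \<tau>_def space_restrict_space abs_mult power_abs intro!: power_le_one)
  qed (simp add: \<tau>_def measurable_restrict_space1)
  moreover have "(\<integral>t. t ^ n \<partial>\<tau>) = (\<integral>x. unit_clamp x ^ n \<partial>M)" for n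
    unfolding \<tau>_def by (rule integral_distr[OF clamp]) (simp add: measurable_restrict_space1)
  moreover have "sets \<tau> = sets (restrict_space borel {0..1})"
    unfolding \<tau>_def by simp
  ultimately show ?thesis
    unfolding hausdorff_moment_seq_def using \<tau>.finite_measure_axioms by (intro exI[of _ \<tau>]) simp
qed

lemma sum_list_group_by_fst:
  fixes ys :: "('a \<times> real) list"
  assumes "finite A" "fst ` set ys \<subseteq> A"
  shows "(\<Sum>a\<in>A. f a * (\<Sum>q\<leftarrow>filter (\<lambda>q. fst q = a) ys. snd q)) = (\<Sum>q\<leftarrow>ys. snd q * f (fst q))"
  using assms(2)
proof (induction ys)
  case (Cons p ys)
  have "(\<Sum>a\<in>A. f a * (\<Sum>q\<leftarrow>filter (\<lambda>q. fst q = a) (p # ys). snd q)) =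
        (\<Sum>a\<in>A. if fst p = a then f a * snd p else 0) + (\<Sum>a\<in>A. f a * (\<Sum>q\<leftarrow>filter (\<lambda>q. fst q = a) ys. snd q))"
    unfolding sum.distrib[symmetric] by (intro sum.cong refl) (simp add: distrib_left)
  also have "(\<Sum>a\<in>A. if fst p = a then f a * snd p else 0) = f (fst p) * snd p"
    using Cons.prems assms(1) by (simp add: sum.delta)
  finally show ?case
    using Cons by simp
qed simp

lemma integral_pmf_of_list:
  fixes f :: "'a \<Rightarrow> real"
  assumes "pmf_of_list_wf xs"
  shows "measure_pmf.expectation (pmf_of_list xs) f = (\<Sum>p\<leftarrow>xs. snd p * f (fst p))"
proof -
  have "measure_pmf.expectation (pmf_of_list xs) f = (\<Sum>a\<in>set (map fst xs). f a * pmf (pmf_of_list xs) a)"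
    by (rule integral_measure_pmf_real) (use set_pmf_of_list[OF assms] in auto)
  also have "\<dots> = (\<Sum>p\<leftarrow>xs. snd p * f (fst p))"
    unfolding pmf_pmf_of_list[OF assms] by (rule sum_list_group_by_fst) auto
  finally show ?thesis .
qed

lemma real_distribution_distr_measure_pmf: "real_distribution (distr (measure_pmf p) borel id)"
  by (intro prob_space.real_distribution_distr measure_pmf.prob_space_axioms) simp

lemma discrete_moment_seq_distribution:
  assumes "discrete_moment_seq c"
  shows "\<exists>\<mu>. real_distribution \<mu> \<and> measure \<mu> {-1<..1} = 1 \<and>
    (\<forall>n. c n = c 0 * (\<integral>x. unit_clamp x ^ n \<partial>\<mu>))"
proof -
  obtain xs where xs: "unit_atoms xs" "c = atom_moments xs"
    using assms unfolding discrete_moment_seq_def by blast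
  show ?thesis
  proof (cases "c 0 = 0")
    case True
    then have "snd p = 0" if "p \<in> set xs" for p
      using xs that sum_list_nonneg_eq_0_iff[of "map snd xs"]
      by (auto simp: atom_moments_def unit_atoms_def)
    then have "c n = 0" for n
      unfolding xs(2) atom_moments_def by (induction xs) auto
    moreover have "measure (distr (measure_pmf (return_pmf 0)) borel id) {-1<..1::real} = 1"
      by (subst measure_distr) auto
    ultimately show ?thesis
      by (intro exI[of _ "distr (measure_pmf (return_pmf 0)) borel id"] conjI allI real_distribution_distr_measure_pmf)
        simp_all
  next
    case False
    define W where "W = c 0"
    have "0 < W"
      using False discrete_moment_seq_nonneg[OF assms, of 0] unfolding W_def by simp
    define ys where "ys = map (\<lambda>p. (fst p, snd p / W)) xs"
    have sum_div: "(\<Sum>p\<leftarrow>xs. g p / W) = (\<Sum>p\<leftarrow>xs. g p) / W" for g :: "real \<times> real \<Rightarrow> real"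
      by (induction xs) (simp_all add: add_divide_distrib)
    have wf: "pmf_of_list_wf ys"
    proof (rule pmf_of_list_wfI)
      show "x \<in> set (map snd ys) \<Longrightarrow> 0 \<le> x" for x
        using xs(1) \<open>0 < W\<close> unfolding ys_def unit_atoms_def by auto
      show "sum_list (map snd ys) = 1"
        using \<open>0 < W\<close> sum_div[of snd] unfolding ys_def W_def xs(2) atom_moments_def by (simp add: o_def)
    qed
    define \<mu> where "\<mu> = distr (measure_pmf (pmf_of_list ys)) borel id"
    have "measure \<mu> {-1<..1} = sum_list (map snd (filter (\<lambda>p. fst p \<in> {-1<..1}) ys))"
      unfolding \<mu>_def by (subst measure_distr) (simp_all add: measure_pmf_of_list[OF wf])
    also have "filter (\<lambda>p. fst p \<in> {-1<..1}) ys = ys"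
      using xs(1) unfolding ys_def unit_atoms_def by (force intro!: filter_True)
    finally have mass: "measure \<mu> {-1<..1} = 1"
      using wf unfolding pmf_of_list_wf_def by simp
    have moments: "c n = W * (\<integral>x. unit_clamp x ^ n \<partial>\<mu>)" for n
    proof -
      have "(\<integral>x. unit_clamp x ^ n \<partial>\<mu>) = (\<Sum>p\<leftarrow>ys. snd p * unit_clamp (fst p) ^ n)"
        unfolding \<mu>_def by (simp add: integral_distr integral_pmf_of_list[OF wf])
      also have "\<dots> = c n / W"
        using xs(1) unfolding ys_def xs(2) atom_moments_def unit_atoms_def
        by (simp add: o_def unit_clamp_id sum_div cong: map_cong)
      finally show ?thesis
        using \<open>0 < W\<close> by simp
    qed
    have "real_distribution \<mu>"
      unfolding \<mu>_def by (rule real_distribution_distr_measure_pmf)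
    then show ?thesis
      by (intro exI[of _ \<mu>] conjI allI mass moments[unfolded W_def])
  qed
qed

lemma limit_moment_seq_imp_hausdorff_moment_seq:
  assumes "limit_moment_seq c"
  shows "hausdorff_moment_seq c"
proof -
  obtain f where f: "\<And>k. discrete_moment_seq (f k)" "\<And>n. (\<lambda>k. f k n) \<longlonglongrightarrow> c n"
    using assms unfolding limit_moment_seq_def by metis
  have "\<exists>\<mu>. real_distribution \<mu> \<and> measure \<mu> {-1<..1} = 1 \<and>
      (\<forall>n. f k n = f k 0 * (\<integral>x. unit_clamp x ^ n \<partial>\<mu>))" for k
    by (rule discrete_moment_seq_distribution[OF f(1)])
  then obtain \<mu> where \<mu>: "\<And>k. real_distribution (\<mu> k)" "\<And>k. measure (\<mu> k) {-1<..1} = 1"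
    "\<And>k n. f k n = f k 0 * (\<integral>x. unit_clamp x ^ n \<partial>\<mu> k)"
    by metis
  \<comment> \<open>All \<mu> k live on [0, 1], so Helly's selection theorem applies.\<close>
  have "tight \<mu>"
    unfolding tight_def
  proof (intro conjI allI impI)
    show "real_distribution (\<mu> k)" for k
      by (rule \<mu>(1))
    show "\<exists>a b. a < b \<and> (\<forall>k. 1 - \<epsilon> < measure (\<mu> k) {a<..b})" if "0 < \<epsilon>" for \<epsilon> :: real
      using \<mu>(2) that by (intro exI[of _ "-1"] exI[of _ 1]) auto
  qed
  then obtain r M where r: "strict_mono r" and M: "real_distribution M" "weak_conv_m (\<mu> \<circ> r) M"
    using tight_imp_convergent_subsubsequence[OF \<open>tight \<mu>\<close> strict_mono_id] by auto
  have "c n = c 0 * (\<integral>x. unit_clamp x ^ n \<partial>M)" for n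
  proof -
    have "(\<lambda>j. \<integral>x. unit_clamp x ^ n \<partial>\<mu> (r j)) \<longlonglongrightarrow> (\<integral>x. unit_clamp x ^ n \<partial>M)"
      using weak_conv_imp_integral_bdd_continuous_conv[OF _ M, of "\<lambda>x. unit_clamp x ^ n" 1]
        \<mu>(1) isCont_unit_clamp_power norm_unit_clamp_power_le_1 by (simp add: o_def)
    then have "(\<lambda>j. f (r j) n) \<longlonglongrightarrow> c 0 * (\<integral>x. unit_clamp x ^ n \<partial>M)"
      unfolding \<mu>(3)[of "r _" n] using LIMSEQ_subseq_LIMSEQ[OF f(2) r] by (intro tendsto_mult) (simp_all add: o_def)
    moreover have "(\<lambda>j. f (r j) n) \<longlonglongrightarrow> c n"
      using LIMSEQ_subseq_LIMSEQ[OF f(2) r] by (simp add: o_def)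
    ultimately show ?thesis
      using LIMSEQ_unique by blast
  qed
  then have "c = (\<lambda>n. c 0 * (\<integral>x. unit_clamp x ^ n \<partial>M))" ..
  then show ?thesis
    by (subst (1) \<open>c = _\<close>) (intro hausdorff_moment_seq_scale hausdorff_moment_seq_distribution
        M(1) limit_moment_seq_nonneg[OF assms])
qed

section \<open>Negative powers of partial sums\<close>

lemma limit_moment_seq_partial_sum_powr_damped:
  assumes a: "limit_moment_seq a" "a 0 > 0" and r: "0 \<le> r" "r < 1" and \<alpha>: "\<alpha> > 0"
  shows "limit_moment_seq (\<lambda>n. (\<Sum>j\<le>n. r ^ j * a j) powr (-\<alpha>))"
proof -
  define b where "b j = r ^ j * a j" for j
  have b: "limit_moment_seq b"
    unfolding b_def using a(1) r by (intro limit_moment_seq_mult limit_moment_seq_geometric) auto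
  have "norm (b j) \<le> a 0 * r ^ j" for j
    using r limit_moment_seq_nonneg[OF a(1), of j] limit_moment_seq_le_0[OF a(1), of j]
    by (simp add: b_def abs_mult mult.commute mult_right_mono)
  moreover have "summable (\<lambda>j. a 0 * r ^ j)"
    using r by (intro summable_mult summable_geometric) auto
  ultimately have "summable b"
    by (rule summable_comparison_test'[rotated])
  define C where "C = suminf b"
  define tail where "tail n = (\<Sum>i. b (i + Suc n))" for n
  have C_eq: "C = (\<Sum>j\<le>n. b j) + tail n" for n
    unfolding C_def tail_def using suminf_split_initial_segment[OF \<open>summable b\<close>, of "Suc n"]
    by (simp add: lessThan_Suc_atMost)
  have tail_sums: "(\<lambda>i. b (n + Suc i)) sums tail n" for n
    unfolding tail_def using summable_ignore_initial_segment[OF \<open>summable b\<close>, of "Suc n"]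
    by (simp add: add.commute summable_sums)
  have tail: "limit_moment_seq tail"
    by (rule limit_moment_seq_sums[OF limit_moment_seq_shift[OF b] tail_sums])
  have partial_pos: "0 < (\<Sum>j\<le>n. b j)" for n
    using limit_moment_seq_le_sum_atMost[OF b, of n] a(2) by (simp add: b_def)
  have "0 \<le> tail n" for n
    using limit_moment_seq_nonneg[OF tail] .
  \<comment> \<open>The binomial series of (C - tail)^(-alpha) in powers of tail has nonnegative coefficients.\<close>
  define coef where "coef i = pochhammer \<alpha> i / fact i * C powr (-\<alpha> - real i)" for i
  have "0 < C" using C_eq[of 0] partial_pos[of 0] \<open>0 \<le> tail 0\<close> by linarith
  then have coef_nonneg: "0 \<le> coef i" for i
    unfolding coef_def using \<alpha> by (simp add: pochhammer_pos less_imp_le)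
  have "(\<lambda>i. coef i * tail n ^ i) sums (\<Sum>j\<le>n. b j) powr (-\<alpha>)" for n
  proof -
    have "\<bar>- tail n\<bar> < C" using C_eq[of n] partial_pos[of n] \<open>0 \<le> tail n\<close> by auto
    from gen_binomial_real''[OF this, of "-\<alpha>"]
    have "(\<lambda>i. (- \<alpha> gchoose i) * C powr (- \<alpha> - real i) * (- tail n) ^ i) sums (C - tail n) powr - \<alpha>"
      by simp
    moreover have "(- \<alpha> gchoose i) * C powr (- \<alpha> - real i) * (- tail n) ^ i = coef i * tail n ^ i" for i
    proof -
      have "(- \<alpha> gchoose i) * (- tail n) ^ i = ((-1) ^ i * (-1) ^ i) * pochhammer \<alpha> i / fact i * tail n ^ i"
        by (simp add: gbinomial_pochhammer power_minus[of "tail n"])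
      also have "(-1::real) ^ i * (-1) ^ i = 1"
        by (simp flip: power_mult_distrib)
      finally have "(- \<alpha> gchoose i) * (- tail n) ^ i = pochhammer \<alpha> i / fact i * tail n ^ i"
        by simp
      then show ?thesis
        unfolding coef_def by (metis mult.commute mult.left_commute)
    qed
    moreover have "C - tail n = (\<Sum>j\<le>n. b j)"
      using C_eq[of n] by simp
    ultimately show ?thesis
      by simp
  qed
  then have "limit_moment_seq (\<lambda>n. (\<Sum>j\<le>n. b j) powr (-\<alpha>))"
    by (rule limit_moment_seq_sums[rotated])
      (use coef_nonneg in \<open>auto intro!: limit_moment_seq_scale limit_moment_seq_power tail\<close>)
  then show ?thesis by (simp add: b_def)
qed

lemma limit_moment_seq_partial_sum_powr:
  assumes a: "limit_moment_seq a" "a 0 > 0" and \<alpha>: "\<alpha> > 0"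
  shows "limit_moment_seq (\<lambda>n. (\<Sum>j\<le>n. a j) powr (-\<alpha>))"
proof (rule limit_moment_seq_limit)
  define r :: "nat \<Rightarrow> real" where "r k = 1 + - inverse (real (Suc k))" for k
  have "0 \<le> r k" "r k < 1" for k
    unfolding r_def by (auto simp: field_simps)
  then show "limit_moment_seq (\<lambda>n. (\<Sum>j\<le>n. r k ^ j * a j) powr (-\<alpha>))" for k
    using a \<alpha> by (intro limit_moment_seq_partial_sum_powr_damped)
  fix n
  have "(\<lambda>k. \<Sum>j\<le>n. r k ^ j * a j) \<longlonglongrightarrow> (\<Sum>j\<le>n. 1 ^ j * a j)"
    unfolding r_def
    by (intro tendsto_sum tendsto_mult tendsto_power tendsto_const LIMSEQ_inverse_real_of_nat_add_minus)
  moreover have "(\<Sum>j\<le>n. a j) \<noteq> 0"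
    using limit_moment_seq_le_sum_atMost[OF a(1), of n] a(2) by simp
  ultimately show "(\<lambda>k. (\<Sum>j\<le>n. r k ^ j * a j) powr (-\<alpha>)) \<longlonglongrightarrow> (\<Sum>j\<le>n. a j) powr (-\<alpha>)"
    by (intro tendsto_powr tendsto_const) auto
qed

section \<open>The sequence m\<close>

lemma is_m_seq_iff:
  "is_m_seq m \<longleftrightarrow> m 0 = 1 \<and> (\<forall>n. 0 < m n) \<and> (\<forall>n. (\<Sum>k\<le>n. m k) * m n = 1)"
proof -
  have split: "(\<Sum>k\<le>n. m k) = m 0 + (\<Sum>k=1..n. m k)" for n
    by (simp add: atMost_atLeast0 sum.atLeast_Suc_atMost)
  have "(\<forall>n\<ge>1. (1 + (\<Sum>k=1..n. m k)) * m n = 1) \<longleftrightarrow> (\<forall>n. (\<Sum>k\<le>n. m k) * m n = 1)"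
    if "m 0 = 1"
  proof -
    have "(\<Sum>k\<le>n. m k) * m n = 1 \<longleftrightarrow> (1 + (\<Sum>k=1..n. m k)) * m n = 1" if "1 \<le> n" for n
      using split[of n] \<open>m 0 = 1\<close> by simp
    moreover have "(\<Sum>k\<le>0. m k) * m 0 = 1"
      using \<open>m 0 = 1\<close> by simp
    ultimately show ?thesis
      by (metis less_one not_less)
  qed
  then show ?thesis
    unfolding is_m_seq_def by blast
qed

text \<open>The partial sums s_n = m_0 + ... + m_n: the relation s_{n+1} m_{n+1} = 1 with
  m_{n+1} = s_{n+1} - s_n says that s_{n+1} is the positive root of s^2 - s_n s - 1.\<close>

fun m_partial_sum :: "nat \<Rightarrow> real" where
  "m_partial_sum 0 = 1"
| "m_partial_sum (Suc n) = (m_partial_sum n + sqrt (m_partial_sum n ^ 2 + 4)) / 2"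

lemma m_partial_sum_ge_1: "1 \<le> m_partial_sum n"
proof (induction n)
  case (Suc n)
  have "m_partial_sum n \<le> sqrt (m_partial_sum n ^ 2 + 4)"
    using real_sqrt_le_mono[of "m_partial_sum n ^ 2" "m_partial_sum n ^ 2 + 4"] Suc by simp
  with Suc show ?case by simp
qed simp

lemma m_partial_sum_Suc: "m_partial_sum (Suc n) = m_partial_sum n + 1 / m_partial_sum (Suc n)"
proof -
  define s where "s = m_partial_sum n"
  define w where "w = sqrt (s ^ 2 + 4)"
  have "w ^ 2 = s ^ 2 + 4" unfolding w_def by simp
  then have "(s + w) / 2 * ((s + w) / 2 - s) = 1"
    by (simp add: field_simps power2_eq_square)
  moreover have "m_partial_sum (Suc n) = (s + w) / 2"
    unfolding s_def w_def by simp
  ultimately have "m_partial_sum (Suc n) * (m_partial_sum (Suc n) - m_partial_sum n) = 1"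
    unfolding s_def by simp
  then show ?thesis
    using m_partial_sum_ge_1[of "Suc n"] by (simp add: field_simps)
qed

lemma sum_inverse_m_partial_sum: "(\<Sum>k\<le>n. 1 / m_partial_sum k) = m_partial_sum n"
  by (induction n) (simp, simp del: m_partial_sum.simps add: m_partial_sum_Suc[symmetric])

lemma is_m_seq_exists: "is_m_seq (\<lambda>n. 1 / m_partial_sum n)"
proof -
  have pos: "0 < m_partial_sum n" for n
    using m_partial_sum_ge_1[of n] by linarith
  then show ?thesis
    unfolding is_m_seq_iff sum_inverse_m_partial_sum by (simp add: pos[THEN less_imp_neq, THEN not_sym])
qed

lemma is_m_seq_unique:
  assumes "is_m_seq m" "is_m_seq m'"
  shows "m = m'"
proof
  fix n show "m n = m' n"
  proof (induction n rule: less_induct)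
    case (less n)
    define P where "P = (\<Sum>k<n. m k)"
    have "P = (\<Sum>k<n. m' k)"
      unfolding P_def using less by simp
    have "(P + m n) * m n = 1"
      using assms(1) unfolding P_def is_m_seq_iff by (simp flip: lessThan_Suc_atMost)
    moreover have "(P + m' n) * m' n = 1"
      using assms(2) unfolding \<open>P = (\<Sum>k<n. m' k)\<close> is_m_seq_iff by (simp flip: lessThan_Suc_atMost)
    ultimately have "(m n - m' n) * (P + m n + m' n) = 0"
      by (simp add: algebra_simps)
    moreover have "0 < P + m n + m' n"
      using assms unfolding P_def is_m_seq_iff by (simp add: add_nonneg_pos sum_nonneg less_imp_le)
    ultimately show ?case by simp
  qed
qed

lemma is_m_seq_m_seq: "is_m_seq m_seq"
  unfolding m_seq_def by (rule theI[of is_m_seq, OF is_m_seq_exists is_m_seq_unique[OF _ is_m_seq_exists]])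

lemma m_seq_0: "m_seq 0 = 1"
  and m_seq_pos: "0 < m_seq n"
  and sum_m_seq_mult: "(\<Sum>k\<le>n. m_seq k) * m_seq n = 1"
  using is_m_seq_m_seq unfolding is_m_seq_iff by auto

lemma LIMSEQ_zero_perturbed_contraction:
  fixes e \<epsilon> :: "nat \<Rightarrow> real"
  assumes nonneg: "\<And>k. 0 \<le> e k" and step: "\<And>k. e (Suc k) \<le> q * e k + \<epsilon> k"
    and q: "0 \<le> q" "q < 1" and \<epsilon>: "\<epsilon> \<longlonglongrightarrow> 0"
  shows "e \<longlonglongrightarrow> 0"
proof (rule LIMSEQ_I)
  fix r :: real assume "0 < r"
  then obtain K where K: "\<And>k. K \<le> k \<Longrightarrow> \<bar>\<epsilon> k\<bar> < (1 - q) * r / 2"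
    using LIMSEQ_D[OF \<epsilon>, of "(1 - q) * r / 2"] q by auto
  have bound: "e (K + j) \<le> q ^ j * e K + r / 2" for j
  proof (induction j)
    case (Suc j)
    have "e (K + Suc j) \<le> q * (q ^ j * e K + r / 2) + (1 - q) * r / 2"
      using step[of "K + j"] K[of "K + j"] mult_left_mono[OF Suc q(1)] by simp
    then show ?case by (simp add: field_simps)
  qed (use \<open>0 < r\<close> in simp)
  have "(\<lambda>j. q ^ j * e K) \<longlonglongrightarrow> 0"
    using q by (intro tendsto_mult_left_zero LIMSEQ_power_zero) auto
  then obtain J where J: "\<And>j. J \<le> j \<Longrightarrow> q ^ j * e K < r / 2"
    using LIMSEQ_D[of _ 0 "r / 2"] \<open>0 < r\<close> by fastforce
  have "norm (e n) < r" if "K + J \<le> n" for n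
  proof -
    have "q ^ (n - K) * e K < r / 2"
      using that by (intro J) arith
    moreover have "e n \<le> q ^ (n - K) * e K + r / 2"
      using bound[of "n - K"] that by simp
    ultimately show ?thesis
      using nonneg[of n] by simp
  qed
  then show "\<exists>N. \<forall>n\<ge>N. norm (e n - 0) < r" by auto
qed

lemma reciprocal_iteration_LIMSEQ:
  fixes S x :: "nat \<Rightarrow> real"
  assumes S: "S \<longlonglongrightarrow> s" "\<And>k. 1 \<le> S k" and x: "\<And>k. 0 \<le> x k"
    and rec: "\<And>k. x (Suc k) = 1 / (S k + x k)"
    and y: "0 < y" "(s + y) * y = 1"
  shows "x \<longlonglongrightarrow> y"
proof -
  have "1 \<le> s" using S by (intro LIMSEQ_le_const[OF S(1)]) auto
  then have "y \<le> s * y"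
    using y(1) by simp
  moreover have "0 < y * y"
    using y(1) by simp
  ultimately have "y < (s + y) * y"
    by (simp add: distrib_right add_le_less_mono[of y "s * y" 0, simplified])
  with y(2) have "y < 1"
    by simp
  \<comment> \<open>Since S k + x k \<ge> 1 and 1 / (s + y) = y, each step shrinks the distance to y by the
    factor y < 1, up to an error y |s - S k| that tends to 0.\<close>
  have step: "\<bar>x (Suc k) - y\<bar> \<le> y * \<bar>x k - y\<bar> + y * \<bar>s - S k\<bar>" for k
  proof -
    have pos: "1 \<le> S k + x k" using S(2)[of k] x[of k] by simp
    have "x (Suc k) - y = y * ((s - S k) + (y - x k)) / (S k + x k)"
      using rec[of k] y(2) pos by (simp add: field_simps)
    then have "\<bar>x (Suc k) - y\<bar> = y * \<bar>(s - S k) + (y - x k)\<bar> / (S k + x k)"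
      using pos y(1) by (simp add: abs_mult abs_divide)
    also have "\<dots> \<le> y * \<bar>(s - S k) + (y - x k)\<bar> / 1"
      using pos y(1) by (intro frac_le) auto
    also have "\<dots> \<le> y * (\<bar>x k - y\<bar> + \<bar>s - S k\<bar>)"
      using y(1) by (simp add: mult_left_mono)
    finally show ?thesis by (simp add: algebra_simps)
  qed
  have "(\<lambda>k. y * \<bar>s - S k\<bar>) \<longlonglongrightarrow> 0"
    using tendsto_diff[OF tendsto_const[of s] S(1)]
    by (intro tendsto_mult_right_zero) (simp add: tendsto_rabs_zero_iff)
  then have "(\<lambda>k. \<bar>x k - y\<bar>) \<longlonglongrightarrow> 0"
    using y(1) \<open>y < 1\<close>
    by (intro LIMSEQ_zero_perturbed_contraction[where e="\<lambda>k. \<bar>x k - y\<bar>" and q=y, OF _ step]) auto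
  then show ?thesis
    by (simp add: tendsto_rabs_zero_iff LIM_zero_iff)
qed

primrec m_iterate :: "nat \<Rightarrow> nat \<Rightarrow> real" where
  "m_iterate 0 n = 0 ^ n"
| "m_iterate (Suc k) n = 1 / (\<Sum>j\<le>n. m_iterate k j)"

lemma m_iterate_0: "m_iterate k 0 = 1"
  by (induction k) simp_all

lemma limit_moment_seq_m_iterate: "limit_moment_seq (m_iterate k)"
proof (induction k)
  case 0
  show ?case
    using limit_moment_seq_geometric[of 0] by (simp add: fun_eq_iff)
next
  case (Suc k)
  have "0 < (\<Sum>j\<le>n. m_iterate k j)" for n
    using limit_moment_seq_le_sum_atMost[OF Suc, of n] by (simp add: m_iterate_0)
  then have "m_iterate (Suc k) = (\<lambda>n. (\<Sum>j\<le>n. m_iterate k j) powr (-1))"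
    by (simp add: fun_eq_iff abs_of_pos)
  moreover have "limit_moment_seq (\<lambda>n. (\<Sum>j\<le>n. m_iterate k j) powr (-1))"
    using Suc by (intro limit_moment_seq_partial_sum_powr) (simp_all add: m_iterate_0)
  ultimately show ?case
    by simp
qed

lemma m_iterate_LIMSEQ: "(\<lambda>k. m_iterate k n) \<longlonglongrightarrow> m_seq n"
proof (induction n rule: less_induct)
  case (less n)
  show ?case
  proof (cases "n = 0")
    case True
    then show ?thesis by (simp add: m_iterate_0 m_seq_0)
  next
    case False
    define S where "S k = (\<Sum>j<n. m_iterate k j)" for k
    show ?thesis
    proof (rule reciprocal_iteration_LIMSEQ)
      show "S \<longlonglongrightarrow> (\<Sum>j<n. m_seq j)"
        unfolding S_def by (intro tendsto_sum less) simp
      show "1 \<le> S k" for k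
        using member_le_sum[of 0 "{..<n}" "m_iterate k"] False
        by (simp add: S_def m_iterate_0 limit_moment_seq_nonneg[OF limit_moment_seq_m_iterate])
      show "0 \<le> m_iterate k n" for k
        by (rule limit_moment_seq_nonneg[OF limit_moment_seq_m_iterate])
      show "m_iterate (Suc k) n = 1 / (S k + m_iterate k n)" for k
        by (simp add: S_def flip: lessThan_Suc_atMost)
      show "((\<Sum>j<n. m_seq j) + m_seq n) * m_seq n = 1"
        using sum_m_seq_mult[of n] by (simp flip: lessThan_Suc_atMost)
    qed (rule m_seq_pos)
  qed
qed

lemma limit_moment_seq_m_seq: "limit_moment_seq m_seq"
  by (rule limit_moment_seq_limit[OF limit_moment_seq_m_iterate m_iterate_LIMSEQ])

lemma limit_moment_seq_m_seq_powr:
  assumes "0 < \<alpha>"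
  shows "limit_moment_seq (\<lambda>n. m_seq n powr \<alpha>)"
proof -
  have "m_seq n powr \<alpha> = (\<Sum>k\<le>n. m_seq k) powr (-\<alpha>)" for n
  proof -
    have "(\<Sum>k\<le>n. m_seq k) = inverse (m_seq n)"
      using sum_m_seq_mult[of n] m_seq_pos[of n] by (simp add: field_simps)
    then show ?thesis
      unfolding powr_minus by (simp add: inverse_powr)
  qed
  then show ?thesis
    using limit_moment_seq_partial_sum_powr[OF limit_moment_seq_m_seq _ assms] by (simp add: m_seq_0)
qed

theorem corollary4p3:
  fixes \<alpha> :: real
  assumes "\<alpha> > 0"
  shows "hausdorff_moment_seq (\<lambda>n. m_seq n powr \<alpha>)"
  by (rule limit_moment_seq_imp_hausdorff_moment_seq[OF limit_moment_seq_m_seq_powr[OF assms]])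

end
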